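(* Let $n=2^m$ with $m\ge 4$ and let $\mathcal{Q}$ be the Steiner quadruple system of the extended Hamming code of length $n$. Then the set $C=\{x\subset\{1,\dots,n\}: |x|=6,\ \text{no block of }\mathcal{Q}\text{ is a subset of }x\}$ is a completely regular code in the Johnson graph $J(n,6)$ with covering radius $2$. Its distance partition is $(C^0,C^1,C^2)$, where $C^j$ is the set of $6$-subsets containing exactly $0$, $1$, $3$ blocks of $\mathcal{Q}$ for $j=0,1,2$ respectively; there are no edges between $C^0$ and $C^2$, and each vertex of $C^1$ is adjacent to exactly $6$ vertices of $C^2$.
   Context: The Johnson graph $J(n,k)$ has as vertices the $k$-element subsets of $\{1,\dots,n\}$, two being adjacent iff they meet in $k-1$ elements. The extended binary Hamming code of length $n=2^m$ is obtained by adding an overall parity bit to the binary Hamming code of length $2^m-1$; its Steiner quadruple system $\mathcal{Q}$ is the set of supports of its weight-$4$ codewords (a $3$-$(n,4,1)$ design). For a nonempty vertex set $C$ of a connected regular graph, $C_i$ is the set of vertices at distance exactly $i$ from $C$, the covering radius is the largest $i$ with $C_i\neq\emptyset$, and $C$ is completely regular if there are numbers $\gamma_i,\alpha_i,\beta_i$ such that every vertex of $C_i$ has exactly $\gamma_i$ neighbours in $C_{i-1}$, $\alpha_i$ in $C_i$, $\beta_i$ in $C_{i+1}$, for all $i$. *)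

theory Defs
  imports Main
begin

definition walk :: "('a \<Rightarrow> 'a \<Rightarrow> bool) \<Rightarrow> 'a \<Rightarrow> 'a \<Rightarrow> nat \<Rightarrow> bool" where
  "walk E x y k \<longleftrightarrow> (\<exists>p :: nat \<Rightarrow> 'a. p 0 = x \<and> p k = y \<and> (\<forall>i<k. E (p i) (p (Suc i))))"

definition dist_to :: "('a \<Rightarrow> 'a \<Rightarrow> bool) \<Rightarrow> 'a set \<Rightarrow> 'a \<Rightarrow> nat" where
  "dist_to E C x = (LEAST k. \<exists>c\<in>C. walk E c x k)"

definition layer :: "'a set \<Rightarrow> ('a \<Rightarrow> 'a \<Rightarrow> bool) \<Rightarrow> 'a set \<Rightarrow> int \<Rightarrow> 'a set" where
  "layer V E C i = {x \<in> V. int (dist_to E C x) = i}"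

definition covering_radius :: "'a set \<Rightarrow> ('a \<Rightarrow> 'a \<Rightarrow> bool) \<Rightarrow> 'a set \<Rightarrow> nat" where
  "covering_radius V E C = Max {i. layer V E C (int i) \<noteq> {}}"

definition completely_regular :: "'a set \<Rightarrow> ('a \<Rightarrow> 'a \<Rightarrow> bool) \<Rightarrow> 'a set \<Rightarrow> bool" where
  "completely_regular V E C \<longleftrightarrow> C \<noteq> {} \<and> C \<subseteq> V \<and>
     (\<exists>\<gamma> \<alpha> \<beta> :: int \<Rightarrow> nat. \<forall>i. \<forall>x \<in> layer V E C i.
        card {y \<in> V. E x y \<and> y \<in> layer V E C (i - 1)} = \<gamma> i \<and>
        card {y \<in> V. E x y \<and> y \<in> layer V E C i} = \<alpha> i \<and>
        card {y \<in> V. E x y \<and> y \<in> layer V E C (i + 1)} = \<beta> i)"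

definition johnson_vertices :: "nat \<Rightarrow> nat \<Rightarrow> nat set set" where
  "johnson_vertices n k = {x. x \<subseteq> {1..n} \<and> card x = k}"

definition johnson_adj :: "nat \<Rightarrow> nat \<Rightarrow> nat set \<Rightarrow> nat set \<Rightarrow> bool" where
  "johnson_adj n k x y \<longleftrightarrow> x \<in> johnson_vertices n k \<and> y \<in> johnson_vertices n k \<and>
      card (x \<inter> y) = k - 1"

text \<open>Binary Hamming code of length 2^m - 1, codewords represented by their supports
  (subsets of {1..2^m-1}); the parity-check matrix has as column i the binary
  representation of i, i.e. bit j of row-syndrome is the parity of #{i in S. bit i j}.\<close>
definition hamming_code :: "nat \<Rightarrow> nat set set" where
  "hamming_code m = {S. S \<subseteq> {1..2^m - 1} \<and> (\<forall>j<m. even (card {i \<in> S. bit i j}))}"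

text \<open>Extended Hamming code of length n = 2^m: overall parity bit at coordinate 2^m.\<close>
definition ext_hamming_code :: "nat \<Rightarrow> nat set set" where
  "ext_hamming_code m =
     (\<lambda>S. if odd (card S) then insert (2^m) S else S) ` hamming_code m"

definition hamming_SQS :: "nat \<Rightarrow> nat set set" where
  "hamming_SQS m = {B \<in> ext_hamming_code m. card B = 4}"

end

(*
  Through the columns of a parity check matrix the n = 2^m points become the vectors of GF(2)^m,
  and the blocks of the Steiner quadruple system become the 4-sets of vectors with zero sum.
  Two blocks inside a 6-set share two points and their symmetric difference is a third block,
  so a 6-set contains 0, 1 or 3 blocks.  A Johnson neighbour of a 6-set x arises by exchanging
  a point u of x for a new point v; it contains the blocks of x avoiding u and one block
  {v} \<union> T for every triple T of x - {u} with sum v.  Counting the points v by the number of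
  such triples shows that the number of neighbours of x with k blocks depends only on the
  number of blocks of x.  Sets with one block have neighbours without blocks, sets with three
  blocks have none but have neighbours with one block, so the block numbers 0, 1, 3 are the
  distances 0, 1, 2 from C, and the neighbour counts become the intersection numbers.
*)
theory Submission
  imports Defs
begin

(* Vectors over GF(2) of finite support, encoded by the bits of a natural number. *)
datatype bvec = BVec (bits: nat)

instantiation bvec :: comm_monoid_add
begin
definition zero_bvec :: bvec where "0 = BVec 0"
fun plus_bvec :: "bvec \<Rightarrow> bvec \<Rightarrow> bvec" where "BVec a + BVec b = BVec (xor a b)"
instance
proof
  fix a b c :: bvec
  show "a + b + c = a + (b + c)" by (cases a; cases b; cases c) (simp add: xor.assoc)
  show "a + b = b + a" by (cases a; cases b) (simp add: xor.commute)
  show "0 + a = a" by (cases a) (simp add: zero_bvec_def)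
qed
end

lemma add_self_bvec [simp]: "x + x = (0::bvec)"
  by (cases x) (simp add: zero_bvec_def)

lemma add_self_left_bvec [simp]: "x + (x + y) = (y::bvec)"
  by (metis add.assoc add_self_bvec add_0)

(*
  A separate predicate on purpose: bvec_eq_iff turns every equation into an is_zero statement
  about a sum, which the simplifier decides by AC-normalisation and cancellation.
*)
definition is_zero :: "bvec \<Rightarrow> bool" where "is_zero x \<longleftrightarrow> x = 0"

lemma is_zero_0 [simp]: "is_zero 0"
  by (simp add: is_zero_def)

lemma bvec_eq_iff: "x = y \<longleftrightarrow> is_zero (x + y)"
  by (cases x; cases y) (auto simp: is_zero_def zero_bvec_def bit_eq_iff bit_xor_iff)

section \<open>Blocks in sets of six vectors\<close>

(* A constant, so that count_subsets_insert is not blocked by simp rewriting B \<subseteq> insert a A. *)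
definition count_subsets :: "nat \<Rightarrow> ('a set \<Rightarrow> bool) \<Rightarrow> 'a set \<Rightarrow> nat" where
  "count_subsets k P A = card {B. B \<subseteq> A \<and> card B = k \<and> P B}"

lemma count_subsets_insert:
  assumes "finite A" "a \<notin> A" "0 < k"
  shows "count_subsets k P (insert a A) = count_subsets k P A + count_subsets (k - 1) (\<lambda>B. P (insert a B)) A"
proof -
  let ?without = "{B. B \<subseteq> A \<and> card B = k \<and> P B}"
  let ?with = "{B. B \<subseteq> A \<and> card B = k - 1 \<and> P (insert a B)}"
  have split: "{B. B \<subseteq> insert a A \<and> card B = k \<and> P B} = ?without \<union> insert a ` ?with"
  proof (intro equalityI subsetI)
    fix B assume B: "B \<in> {B. B \<subseteq> insert a A \<and> card B = k \<and> P B}"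
    show "B \<in> ?without \<union> insert a ` ?with"
    proof (cases "a \<in> B")
      case True
      have "finite B"
        using B assms(1) by (auto dest: finite_subset)
      with B True have "B - {a} \<in> ?with"
        by (auto simp: insert_absorb)
      moreover have "B = insert a (B - {a})"
        using True by blast
      ultimately show ?thesis by blast
    qed (use B in auto)
  next
    fix B assume "B \<in> ?without \<union> insert a ` ?with"
    then show "B \<in> {B. B \<subseteq> insert a A \<and> card B = k \<and> P B}"
    proof
      assume "B \<in> insert a ` ?with"
      then obtain T where T: "T \<in> ?with" "B = insert a T"
        by blast
      then have "finite T" "a \<notin> T"
        using assms(1,2) finite_subset by auto
      with T assms(3) show ?thesis
        by auto
    qed auto
  qed
  have "inj_on (insert a) ?with"
    using assms(2) by (intro inj_onI) (metis Diff_insert_absorb mem_Collect_eq subsetD)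
  moreover have "?without \<inter> insert a ` ?with = {}"
    using assms(2) by auto
  moreover have "finite ?without" "finite ?with"
    using assms(1) by (auto intro: finite_subset[of _ "Pow A"])
  ultimately show ?thesis
    unfolding count_subsets_def split by (simp add: card_Un_disjoint card_image)
qed

lemma count_subsets_0: "finite A \<Longrightarrow> count_subsets 0 P A = of_bool (P {})"
proof -
  assume "finite A"
  then have "{B. B \<subseteq> A \<and> card B = 0 \<and> P B} = (if P {} then {{}} else {})"
    by (auto dest: finite_subset)
  then show ?thesis
    unfolding count_subsets_def by simp
qed

lemma count_subsets_empty: "0 < k \<Longrightarrow> count_subsets k P {} = 0"
  by (simp add: count_subsets_def)

definition blocks_in :: "bvec set \<Rightarrow> bvec set set" where
  "blocks_in X = {B. B \<subseteq> X \<and> card B = 4 \<and> is_zero (\<Sum>B)}"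

lemma card_blocks_in_eq_count_subsets: "card (blocks_in X) = count_subsets 4 (\<lambda>B. is_zero (\<Sum>B)) X"
  unfolding blocks_in_def count_subsets_def ..

lemma card_blocks_in_sextuple:
  assumes "distinct [a,b,c,d,e,f]"
  shows "card (blocks_in {a,b,c,d,e,f}) =
    of_bool (is_zero (a+b+c+d)) + of_bool (is_zero (a+b+c+e)) + of_bool (is_zero (a+b+c+f)) +
    of_bool (is_zero (a+b+d+e)) + of_bool (is_zero (a+b+d+f)) + of_bool (is_zero (a+b+e+f)) +
    of_bool (is_zero (a+c+d+e)) + of_bool (is_zero (a+c+d+f)) + of_bool (is_zero (a+c+e+f)) +
    of_bool (is_zero (a+d+e+f)) + of_bool (is_zero (b+c+d+e)) + of_bool (is_zero (b+c+d+f)) +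
    of_bool (is_zero (b+c+e+f)) + of_bool (is_zero (b+d+e+f)) + of_bool (is_zero (c+d+e+f))"
  using assms
  by (simp add: card_blocks_in_eq_count_subsets count_subsets_insert count_subsets_0
      count_subsets_empty add_ac)

lemma card_blocks_in_exchange_free:
  assumes "distinct [a,b,c,d,e,f]" "card (blocks_in {a,b,c,d,e,f}) = 0" "g \<notin> {a,b,c,d,e,f}"
  shows "card (blocks_in (insert g {b,c,d,e,f})) =
    (if g \<in> {b+c+d, b+c+e, b+c+f, b+d+e, b+d+f, b+e+f, c+d+e, c+d+f, c+e+f, d+e+f} then 1 else 0)"
proof -
  have "distinct [g,b,c,d,e,f]"
    using assms(1,3) by auto
  note count = card_blocks_in_sextuple[OF this]
  note free = assms(2)[unfolded card_blocks_in_sextuple[OF assms(1)]]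
  show ?thesis
  proof (cases "g \<in> {b+c+d, b+c+e, b+c+f, b+d+e, b+d+f, b+e+f, c+d+e, c+d+f, c+e+f, d+e+f}")
    case True
    (* simp only: substitutes g before bvec_eq_iff can rewrite the equation for g *)
    then show ?thesis
      unfolding count using assms(1) free
      by (elim insertE emptyE; simp only:; simp add: bvec_eq_iff add_ac)
  next
    case False
    then show ?thesis
      unfolding count using assms free
      by (simp add: bvec_eq_iff add_ac)
  qed
qed

lemma card_blocks_in_exchange_off_block:
  assumes "distinct [p,q,c,d,e,f]" "is_zero (c+d+e+f)" "card (blocks_in {p,q,c,d,e,f}) = 1"
    and "g \<notin> {p,q,c,d,e,f}"
  shows "card (blocks_in (insert g {q,c,d,e,f})) = (if g \<in> {q+c+d, q+c+e, q+c+f} then 3 else 1)"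
proof -
  have "distinct [g,q,c,d,e,f]"
    using assms(1,4) by auto
  note count = card_blocks_in_sextuple[OF this]
  note one = assms(3)[unfolded card_blocks_in_sextuple[OF assms(1)]]
  have f: "f = c + d + e"
    using assms(2) by (simp add: bvec_eq_iff add_ac)
  show ?thesis
  proof (cases "g \<in> {q+c+d, q+c+e, q+c+f}")
    case True
    then show ?thesis
      unfolding count using assms(1) one
      by (elim insertE emptyE; simp only:; simp add: f bvec_eq_iff add_ac)
  next
    case False
    then show ?thesis
      unfolding count using assms one
      by (simp add: f bvec_eq_iff add_ac)
  qed
qed

lemma card_blocks_in_exchange_on_block:
  assumes "distinct [p,q,c,d,e,f]" "is_zero (c+d+e+f)" "card (blocks_in {p,q,c,d,e,f}) = 1"
    and "g \<notin> {p,q,c,d,e,f}"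
  shows "card (blocks_in (insert g {p,q,d,e,f})) =
    (if g \<in> {p+q+d, p+q+e, p+q+f, p+d+e, p+d+f, p+e+f, q+d+e, q+d+f, q+e+f} then 1 else 0)"
proof -
  have "distinct [g,p,q,d,e,f]"
    using assms(1,4) by auto
  note count = card_blocks_in_sextuple[OF this]
  note one = assms(3)[unfolded card_blocks_in_sextuple[OF assms(1)]]
  have c: "c = d + e + f"
    using assms(2) by (simp add: bvec_eq_iff add_ac)
  show ?thesis
  proof (cases "g \<in> {p+q+d, p+q+e, p+q+f, p+d+e, p+d+f, p+e+f, q+d+e, q+d+f, q+e+f}")
    case True
    then show ?thesis
      unfolding count using assms(1) one
      by (elim insertE emptyE; simp only:; simp add: c bvec_eq_iff add_ac)
  next
    case False
    then show ?thesis
      unfolding count using assms one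
      by (simp add: c bvec_eq_iff add_ac)
  qed
qed

lemma card_blocks_in_exchange_three_blocks:
  assumes "distinct [a,a',b,b',c,c']" "is_zero (a+a'+b+b')" "is_zero (a+a'+c+c')"
    and "g \<notin> {a,a',b,b',c,c'}"
  shows "card (blocks_in (insert g {a',b,b',c,c'})) = (if g \<in> {a'+b+c, a'+b+c'} then 3 else 1)"
proof -
  have "distinct [g,a',b,b',c,c']"
    using assms(1,4) by auto
  note count = card_blocks_in_sextuple[OF this]
  have a': "a' = a + b + b'" and c': "c' = a + a' + c"
    using assms(2,3) by (simp_all add: bvec_eq_iff add_ac)
  show ?thesis
  proof (cases "g \<in> {a'+b+c, a'+b+c'}")
    case True
    then show ?thesis
      unfolding count using assms(1)
      by (elim insertE emptyE; simp only:; simp add: a' c' bvec_eq_iff add_ac)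
  next
    case False
    then show ?thesis
      unfolding count using assms(1,4)
      by (simp add: a' c' bvec_eq_iff add_ac)
  qed
qed

lemma distinct_list_of_card:
  assumes "card A = n" "0 < n"
  obtains xs where "set xs = A" "distinct xs" "length xs = n"
proof -
  have "finite A"
    using assms card_ge_0_finite by blast
  then obtain xs where "set xs = A" "distinct xs"
    using finite_distinct_list by blast
  moreover from this have "length xs = n"
    using assms(1) distinct_card by fastforce
  ultimately show thesis using that by blast
qed

lemma card_eq_5_obtain:
  assumes "card A = 5"
  obtains a b c d e where "A = {a,b,c,d,e}" "distinct [a,b,c,d,e]"
proof -
  obtain xs where "set xs = A" "distinct xs" "length xs = 5"
    using distinct_list_of_card[OF assms] by auto
  then show thesis
    using that by (auto simp: numeral_eq_Suc length_Suc_conv)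
qed

lemma sextuple_obtain:
  assumes "card X = 6" "u \<in> X"
  obtains b c d e f where "X = {u,b,c,d,e,f}" "distinct [u,b,c,d,e,f]"
proof -
  have "card (X - {u}) = 5"
    using assms by (simp add: card_gt_0_iff)
  then obtain b c d e f where "X - {u} = {b,c,d,e,f}" "distinct [b,c,d,e,f]"
    by (rule card_eq_5_obtain)
  with assms(2) show thesis
    using that[of b c d e f] by (metis Diff_iff distinct.simps(2) insertI1 insert_Diff list.set(1,2))
qed

lemma quadruple_in_blocks_in_iff:
  assumes "distinct [a,b,c,d]"
  shows "{a,b,c,d} \<in> blocks_in X \<longleftrightarrow> {a,b,c,d} \<subseteq> X \<and> is_zero (a+b+c+d)"
  using assms by (simp add: blocks_in_def add.assoc)

lemma sextuple_around_block:
  assumes "card X = 6" "B \<in> blocks_in X" "c \<in> B"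
  obtains p q d e f where "X = {p,q,c,d,e,f}" "B = {c,d,e,f}" "distinct [p,q,c,d,e,f]"
    "is_zero (c+d+e+f)"
proof -
  have B: "B \<subseteq> X" "card B = 4"
    using assms(2) by (auto simp: blocks_in_def)
  have "finite X"
    using assms(1) by (simp add: card_ge_0_finite)
  then have "finite B"
    using B(1) finite_subset by blast
  then have "card (B - {c}) = 3"
    using B(2) assms(3) by simp
  then obtain d e f where def: "B - {c} = {d,e,f}" "d \<noteq> e" "e \<noteq> f" "d \<noteq> f"
    by (auto simp: card_3_iff)
  have "card (X - B) = 2"
    using assms(1) B \<open>finite B\<close> by (simp add: card_Diff_subset)
  then obtain p q where pq: "X - B = {p,q}" "p \<noteq> q"
    by (auto simp: card_2_iff)
  have B_eq: "B = {c,d,e,f}"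
    using assms(3) def(1) by blast
  moreover have "X = {p,q,c,d,e,f}"
    using B(1) pq(1) B_eq by blast
  moreover have "distinct [p,q,c,d,e,f]"
    using def pq B_eq by (auto dest: equalityD1)
  moreover have "is_zero (c+d+e+f)"
    using assms(2) \<open>distinct [p,q,c,d,e,f]\<close> unfolding B_eq
    by (simp add: quadruple_in_blocks_in_iff)
  ultimately show thesis
    using that by blast
qed

lemma sextuple_beside_block:
  assumes "card X = 6" "B \<in> blocks_in X" "p \<in> X - B"
  obtains q c d e f where "X = {p,q,c,d,e,f}" "B = {c,d,e,f}" "distinct [p,q,c,d,e,f]"
    "is_zero (c+d+e+f)"
proof -
  obtain c where "c \<in> B"
    using assms(2) by (fastforce simp: blocks_in_def)
  then obtain p' q d e f where X: "X = {p',q,c,d,e,f}" "B = {c,d,e,f}" "distinct [p',q,c,d,e,f]"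
    "is_zero (c+d+e+f)"
    by (rule sextuple_around_block[OF assms(1,2)])
  with assms(3) have "p = p' \<or> p = q"
    by auto
  then show thesis
  proof
    assume "p = q"
    moreover have "{p',q,c,d,e,f} = {q,p',c,d,e,f}"
      by (simp add: insert_commute)
    ultimately show thesis
      using that[of p' c d e f] X by auto
  qed (use that X in blast)
qed

lemma card_blocks_in_sextuple_with_block:
  assumes "distinct [p,q,c,d,e,f]" "is_zero (c+d+e+f)"
  shows "card (blocks_in {p,q,c,d,e,f}) =
    (if is_zero (p+q+c+d) \<or> is_zero (p+q+c+e) \<or> is_zero (p+q+c+f) then 3 else 1)"
proof -
  have f: "f = c + d + e"
    using assms(2) by (simp add: bvec_eq_iff add_ac)
  note count = card_blocks_in_sextuple[OF assms(1)]
  consider "d = p + q + c" | "e = p + q + c" | "e = p + q + d"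
    | "\<not> is_zero (p+q+c+d)" "\<not> is_zero (p+q+c+e)" "\<not> is_zero (p+q+c+f)"
    by (auto simp: f bvec_eq_iff add_ac)
  then show ?thesis
    unfolding count using assms(1)
    by cases (simp only: f; simp add: bvec_eq_iff add_ac)+
qed

lemma card_blocks_in_sextuple_cases:
  assumes "card X = 6"
  shows "card (blocks_in X) \<in> {0, 1, 3}"
proof (cases "blocks_in X = {}")
  case False
  then obtain B where B: "B \<in> blocks_in X"
    by blast
  then obtain c where "c \<in> B"
    by (fastforce simp: blocks_in_def)
  then obtain p q d e f where "X = {p,q,c,d,e,f}" "distinct [p,q,c,d,e,f]" "is_zero (c+d+e+f)"
    by (rule sextuple_around_block[OF assms B])
  then show ?thesis
    using card_blocks_in_sextuple_with_block by simp
qed simp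

lemma sextuple_with_three_blocks:
  assumes "card X = 6" "card (blocks_in X) = 3" "u \<in> X"
  obtains u' b b' c c' where "X = {u,u',b,b',c,c'}" "distinct [u,u',b,b',c,c']"
    "is_zero (u+u'+b+b')" "is_zero (u+u'+c+c')"
proof -
  obtain B where B: "B \<in> blocks_in X"
    using assms(2) by fastforce
  have "\<exists>B \<in> blocks_in X. u \<in> B"
  proof (cases "u \<in> B")
    case False
    with assms(3) have "u \<in> X - B"
      by blast
    then obtain q c d e f where X: "X = {u,q,c,d,e,f}" "distinct [u,q,c,d,e,f]"
      "is_zero (c+d+e+f)"
      by (rule sextuple_beside_block[OF assms(1) B])
    then have "is_zero (u+q+c+d) \<or> is_zero (u+q+c+e) \<or> is_zero (u+q+c+f)"
      using assms(2) card_blocks_in_sextuple_with_block[OF X(2,3)] by (simp split: if_splits)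
    then have "{u,q,c,d} \<in> blocks_in X \<or> {u,q,c,e} \<in> blocks_in X \<or> {u,q,c,f} \<in> blocks_in X"
      using X by (simp add: quadruple_in_blocks_in_iff)
    then show ?thesis
      by blast
  qed (use B in blast)
  then obtain B where "B \<in> blocks_in X" "u \<in> B"
    by blast
  then obtain p q d e f where X: "X = {p,q,u,d,e,f}" "distinct [p,q,u,d,e,f]" "is_zero (u+d+e+f)"
    by (rule sextuple_around_block[OF assms(1)])
  then have "is_zero (p+q+u+d) \<or> is_zero (p+q+u+e) \<or> is_zero (p+q+u+f)"
    using assms(2) card_blocks_in_sextuple_with_block[OF X(2,3)] by (simp split: if_splits)
  then show thesis
  proof (elim disjE)
    assume "is_zero (p+q+u+d)"
    moreover have "X = {u,d,p,q,e,f}"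
      using X(1) by blast
    ultimately show thesis
      using that[of d p q e f] X(2,3) by (auto simp: add_ac)
  next
    assume "is_zero (p+q+u+e)"
    moreover have "X = {u,e,p,q,d,f}"
      using X(1) by blast
    ultimately show thesis
      using that[of e p q d f] X(2,3) by (auto simp: add_ac)
  next
    assume "is_zero (p+q+u+f)"
    moreover have "X = {u,f,p,q,d,e}"
      using X(1) by blast
    ultimately show thesis
      using that[of f p q d e] X(2,3) by (auto simp: add_ac)
  qed
qed

section \<open>Exchanging one vector of a six-element set\<close>

lemma card_level_set_two_valued:
  assumes "finite A" "R \<subseteq> A" "k\<^sub>1 \<noteq> k\<^sub>2"
    and "\<And>x. x \<in> A \<Longrightarrow> F x = (if x \<in> R then k\<^sub>1 else k\<^sub>2)"
  shows "card {x \<in> A. F x = k} = (if k = k\<^sub>1 then card R else if k = k\<^sub>2 then card A - card R else 0)"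
proof -
  have "{x \<in> A. F x = k} = {x \<in> A. (if x \<in> R then k\<^sub>1 else k\<^sub>2) = k}"
    using assms(4) by auto
  also have "\<dots> = (if k = k\<^sub>1 then R else if k = k\<^sub>2 then A - R else {})"
    using assms(2,3) by auto
  finally show ?thesis
    using assms(1,2) by (simp add: card_Diff_subset finite_subset)
qed

(* The number of Johnson neighbours with k blocks of a 6-set with j blocks, among n points. *)
definition neighbour_profile :: "nat \<Rightarrow> nat \<Rightarrow> nat \<Rightarrow> nat" where
  "neighbour_profile n j k =
    (if j = 0 then (if k = 1 then 60 else if k = 0 then 6 * (n - 16) else 0)
     else if j = 1 then (if k = 3 then 6 else if k = 1 then 36 + 2 * (n - 9) else if k = 0 then 4 * (n - 15) else 0)
     else (if k = 3 then 12 else if k = 1 then 6 * (n - 8) else 0))"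

locale add_closed_set =
  fixes G :: "bvec set"
  assumes finite_carrier: "finite G"
    and add_closed [intro]: "x \<in> G \<Longrightarrow> y \<in> G \<Longrightarrow> x + y \<in> G"
begin

lemma card_exchanges_two_valued:
  assumes "X \<subseteq> G" "card X = 6" "R \<subseteq> G - X" "k\<^sub>1 \<noteq> k\<^sub>2"
    and "\<And>g. g \<in> G - X \<Longrightarrow> F g = (if g \<in> R then k\<^sub>1 else k\<^sub>2)"
  shows "card {g \<in> G - X. F g = k} =
    (if k = k\<^sub>1 then card R else if k = k\<^sub>2 then card G - 6 - card R else 0)"
  using card_level_set_two_valued[of "G - X" R k\<^sub>1 k\<^sub>2 F k] assms finite_carrier
  by (simp add: card_Diff_subset finite_subset)

lemma card_exchanges_free:
  assumes "X \<subseteq> G" "card X = 6" "card (blocks_in X) = 0" "u \<in> X"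
  shows "card {g \<in> G - X. card (blocks_in (insert g (X - {u}))) = k} =
    (if k = 1 then 10 else if k = 0 then card G - 16 else 0)"
proof -
  obtain b c d e f where X: "X = {u,b,c,d,e,f}" and distinct: "distinct [u,b,c,d,e,f]"
    using sextuple_obtain[OF assms(2,4)] .
  note free = assms(3)[unfolded X]
  define R where "R = {b+c+d, b+c+e, b+c+f, b+d+e, b+d+f, b+e+f, c+d+e, c+d+f, c+e+f, d+e+f}"
  have "X - {u} = {b,c,d,e,f}"
    using X distinct by auto
  have exchange: "card (blocks_in (insert g (X - {u}))) = (if g \<in> R then 1 else 0)"
    if "g \<in> G - X" for g
  proof -
    have "g \<notin> {u,b,c,d,e,f}"
      using that X by blast
    from card_blocks_in_exchange_free[OF distinct free this] show ?thesis
      unfolding R_def \<open>X - {u} = {b,c,d,e,f}\<close> .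
  qed
  have "R \<subseteq> G"
    using assms(1) unfolding X R_def by (simp add: add_closed)
  moreover have "R \<inter> X = {}"
    using distinct free[unfolded card_blocks_in_sextuple[OF distinct]] unfolding X R_def
    by (simp add: bvec_eq_iff add_ac)
  ultimately have "R \<subseteq> G - X"
    by blast
  have "card R = 10"
    using distinct free[unfolded card_blocks_in_sextuple[OF distinct]] unfolding R_def
    by (simp add: card_insert_if bvec_eq_iff add_ac)
  show ?thesis
    using card_exchanges_two_valued[OF assms(1,2) \<open>R \<subseteq> G - X\<close> _ exchange] \<open>card R = 10\<close>
    by simp
qed

lemma card_exchanges_off_block:
  assumes "X \<subseteq> G" "card X = 6" "card (blocks_in X) = 1" "B \<in> blocks_in X" "u \<in> X - B"
  shows "card {g \<in> G - X. card (blocks_in (insert g (X - {u}))) = k} =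
    (if k = 3 then 3 else if k = 1 then card G - 9 else 0)"
proof -
  obtain q c d e f where X: "X = {u,q,c,d,e,f}" and "B = {c,d,e,f}"
    and distinct: "distinct [u,q,c,d,e,f]" and block: "is_zero (c+d+e+f)"
    by (rule sextuple_beside_block[OF assms(2,4,5)])
  note one = assms(3)[unfolded X]
  define R where "R = {q+c+d, q+c+e, q+c+f}"
  have "X - {u} = {q,c,d,e,f}"
    using X distinct by auto
  have exchange: "card (blocks_in (insert g (X - {u}))) = (if g \<in> R then 3 else 1)"
    if "g \<in> G - X" for g
  proof -
    have "g \<notin> {u,q,c,d,e,f}"
      using that X by blast
    from card_blocks_in_exchange_off_block[OF distinct block one this] show ?thesis
      unfolding R_def \<open>X - {u} = {q,c,d,e,f}\<close> .
  qed
  have f: "f = c + d + e"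
    using block by (simp add: bvec_eq_iff add_ac)
  have "R \<subseteq> G"
    using assms(1) unfolding X R_def by (simp add: add_closed)
  moreover have "R \<inter> X = {}"
    using distinct block one[unfolded card_blocks_in_sextuple[OF distinct]] unfolding X R_def
    by (simp add: f bvec_eq_iff add_ac)
  ultimately have "R \<subseteq> G - X"
    by blast
  have "card R = 3"
    using distinct unfolding R_def by (simp add: f card_insert_if bvec_eq_iff add_ac)
  show ?thesis
    using card_exchanges_two_valued[OF assms(1,2) \<open>R \<subseteq> G - X\<close> _ exchange] \<open>card R = 3\<close>
    by simp
qed

lemma card_exchanges_on_block:
  assumes "X \<subseteq> G" "card X = 6" "card (blocks_in X) = 1" "B \<in> blocks_in X" "u \<in> B"
  shows "card {g \<in> G - X. card (blocks_in (insert g (X - {u}))) = k} =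
    (if k = 1 then 9 else if k = 0 then card G - 15 else 0)"
proof -
  obtain p q d e f where X: "X = {p,q,u,d,e,f}" and "B = {u,d,e,f}"
    and distinct: "distinct [p,q,u,d,e,f]" and block: "is_zero (u+d+e+f)"
    by (rule sextuple_around_block[OF assms(2,4,5)])
  note one = assms(3)[unfolded X]
  define R where "R = {p+q+d, p+q+e, p+q+f, p+d+e, p+d+f, p+e+f, q+d+e, q+d+f, q+e+f}"
  have "X - {u} = {p,q,d,e,f}"
    using X distinct by auto
  have exchange: "card (blocks_in (insert g (X - {u}))) = (if g \<in> R then 1 else 0)"
    if "g \<in> G - X" for g
  proof -
    have "g \<notin> {p,q,u,d,e,f}"
      using that X by blast
    from card_blocks_in_exchange_on_block[OF distinct block one this] show ?thesis
      unfolding R_def \<open>X - {u} = {p,q,d,e,f}\<close> .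
  qed
  have u: "u = d + e + f"
    using block by (simp add: bvec_eq_iff add_ac)
  have "R \<subseteq> G"
    using assms(1) unfolding X R_def by (simp add: add_closed)
  moreover have "R \<inter> X = {}"
    using distinct one[unfolded card_blocks_in_sextuple[OF distinct]] unfolding X R_def
    by (simp add: u bvec_eq_iff add_ac)
  ultimately have "R \<subseteq> G - X"
    by blast
  have "card R = 9"
    using distinct one[unfolded card_blocks_in_sextuple[OF distinct]] unfolding R_def
    by (simp add: u card_insert_if bvec_eq_iff add_ac)
  show ?thesis
    using card_exchanges_two_valued[OF assms(1,2) \<open>R \<subseteq> G - X\<close> _ exchange] \<open>card R = 9\<close>
    by simp
qed

lemma card_exchanges_three_blocks:
  assumes "X \<subseteq> G" "card X = 6" "card (blocks_in X) = 3" "u \<in> X"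
  shows "card {g \<in> G - X. card (blocks_in (insert g (X - {u}))) = k} =
    (if k = 3 then 2 else if k = 1 then card G - 8 else 0)"
proof -
  obtain u' b b' c c' where X: "X = {u,u',b,b',c,c'}" and distinct: "distinct [u,u',b,b',c,c']"
    and blocks: "is_zero (u+u'+b+b')" "is_zero (u+u'+c+c')"
    using sextuple_with_three_blocks[OF assms(2-4)] by blast
  define R where "R = {u'+b+c, u'+b+c'}"
  have "X - {u} = {u',b,b',c,c'}"
    using X distinct by auto
  have exchange: "card (blocks_in (insert g (X - {u}))) = (if g \<in> R then 3 else 1)"
    if "g \<in> G - X" for g
  proof -
    have "g \<notin> {u,u',b,b',c,c'}"
      using that X by blast
    from card_blocks_in_exchange_three_blocks[OF distinct blocks this] show ?thesis
      unfolding R_def \<open>X - {u} = {u',b,b',c,c'}\<close> .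
  qed
  have u': "u' = u + b + b'" and c': "c' = u + u' + c"
    using blocks by (simp_all add: bvec_eq_iff add_ac)
  have "R \<subseteq> G"
    using assms(1) unfolding X R_def by (simp add: add_closed)
  moreover have "R \<inter> X = {}"
    using distinct unfolding X R_def by (simp add: u' c' bvec_eq_iff add_ac)
  ultimately have "R \<subseteq> G - X"
    by blast
  have "card R = 2"
    using distinct unfolding R_def by (simp add: u' c' bvec_eq_iff add_ac)
  show ?thesis
    using card_exchanges_two_valued[OF assms(1,2) \<open>R \<subseteq> G - X\<close> _ exchange] \<open>card R = 2\<close>
    by simp
qed

lemma sum_card_exchanges:
  assumes "X \<subseteq> G" "card X = 6"
  shows "(\<Sum>u\<in>X. card {g \<in> G - X. card (blocks_in (insert g (X - {u}))) = k}) =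
    neighbour_profile (card G) (card (blocks_in X)) k"
proof -
  consider "card (blocks_in X) = 0" | "card (blocks_in X) = 1" | "card (blocks_in X) = 3"
    using card_blocks_in_sextuple_cases[OF assms(2)] by auto
  then show ?thesis
  proof cases
    case free: 1
    then show ?thesis
      using card_exchanges_free[OF assms free] assms(2) by (simp add: neighbour_profile_def)
  next
    case one: 2
    then obtain B where B: "B \<in> blocks_in X"
      by fastforce
    then have "B \<subseteq> X" "card B = 4"
      by (auto simp: blocks_in_def)
    moreover have "finite X"
      using assms(1) finite_carrier by (rule finite_subset)
    ultimately have "card (X - B) = 2"
      using assms(2) by (simp add: card_Diff_subset finite_subset)
    have "(\<Sum>u\<in>X. card {g \<in> G - X. card (blocks_in (insert g (X - {u}))) = k}) =
      (\<Sum>u\<in>B. card {g \<in> G - X. card (blocks_in (insert g (X - {u}))) = k}) +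
      (\<Sum>u\<in>X - B. card {g \<in> G - X. card (blocks_in (insert g (X - {u}))) = k})"
      using \<open>B \<subseteq> X\<close> \<open>finite X\<close> by (simp add: sum.subset_diff)
    then show ?thesis
      using card_exchanges_on_block[OF assms one B] card_exchanges_off_block[OF assms one B]
        \<open>card B = 4\<close> \<open>card (X - B) = 2\<close> one
      by (simp add: neighbour_profile_def)
  next
    case three: 3
    then show ?thesis
      using card_exchanges_three_blocks[OF assms three] assms(2) by (simp add: neighbour_profile_def)
  qed
qed

end

section \<open>The extended Hamming code\<close>

lemma bit_bits_sum:
  assumes "finite B"
  shows "bit (bits (\<Sum>i\<in>B. f i)) j \<longleftrightarrow> odd (card {i \<in> B. bit (bits (f i)) j})"
  using assms
proof (induction B rule: finite_induct)
  case (insert a B)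
  have "bits (f a + (\<Sum>i\<in>B. f i)) = xor (bits (f a)) (bits (\<Sum>i\<in>B. f i))"
    by (cases "f a"; cases "\<Sum>i\<in>B. f i") simp
  moreover have "{i \<in> insert a B. bit (bits (f i)) j} =
      (if bit (bits (f a)) j then insert a {i \<in> B. bit (bits (f i)) j} else {i \<in> B. bit (bits (f i)) j})"
    by auto
  ultimately show ?case
    using insert by (simp add: bit_xor_iff)
qed (simp add: zero_bvec_def)

lemma is_zero_iff_bits: "is_zero x \<longleftrightarrow> (\<forall>j. \<not> bit (bits x) j)"
  by (cases x) (simp add: is_zero_def zero_bvec_def bit_eq_iff)

(*
  The column of coordinate i in a parity check matrix of the Hamming code: the binary digits of i,
  the parity coordinate 2^m giving the zero column.  The overall parity row is accounted for by
  blocks having even size.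
*)
definition check_column :: "nat \<Rightarrow> nat \<Rightarrow> bvec" where
  "check_column m i = BVec (i mod 2 ^ m)"

lemma is_zero_sum_check_column:
  assumes "finite B"
  shows "is_zero (\<Sum>i\<in>B. check_column m i) \<longleftrightarrow> (\<forall>j<m. even (card {i \<in> B. bit i j}))"
proof -
  have "{i \<in> B. bit (i mod 2 ^ m) j} = (if j < m then {i \<in> B. bit i j} else {})" for j
    by (auto simp flip: take_bit_eq_mod simp: bit_take_bit_iff)
  then show ?thesis
    unfolding is_zero_iff_bits bit_bits_sum[OF assms] check_column_def
    by simp
qed

lemma ext_hamming_code_iff:
  assumes "B \<subseteq> {1..2 ^ m}" "even (card B)"
  shows "B \<in> ext_hamming_code m \<longleftrightarrow> B - {2 ^ m} \<in> hamming_code m"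
proof
  assume "B \<in> ext_hamming_code m"
  then obtain S where S: "S \<in> hamming_code m" "B = (if odd (card S) then insert (2 ^ m) S else S)"
    unfolding ext_hamming_code_def by blast
  have "(2::nat) ^ m - 1 < 2 ^ m"
    by simp
  then have "(2::nat) ^ m \<notin> {1..2 ^ m - 1}"
    by (meson atLeastAtMost_iff not_le)
  then have "2 ^ m \<notin> S"
    using S(1) unfolding hamming_code_def by blast
  with S(2) have "B - {2 ^ m} = S"
    by auto
  with S(1) show "B - {2 ^ m} \<in> hamming_code m"
    by simp
next
  assume S: "B - {2 ^ m} \<in> hamming_code m"
  have "finite B"
    using assms(1) finite_subset by blast
  then have "B = (if odd (card (B - {2 ^ m})) then insert (2 ^ m) (B - {2 ^ m}) else B - {2 ^ m})"
    using assms(2) by (cases "2 ^ m \<in> B") (auto simp: insert_absorb)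
  then show "B \<in> ext_hamming_code m"
    unfolding ext_hamming_code_def using S by (rule image_eqI)
qed

lemma mem_hamming_SQS_iff:
  assumes "B \<subseteq> {1..2 ^ m}" "card B = 4"
  shows "B \<in> hamming_SQS m \<longleftrightarrow> is_zero (\<Sum>i\<in>B. check_column m i)"
proof -
  have "B - {2 ^ m} \<subseteq> {1..2 ^ m - 1}"
    using assms(1) by auto
  moreover have "{i \<in> B - {2 ^ m}. bit i j} = {i \<in> B. bit i j}" if "j < m" for j
    using that by (auto simp: bit_exp_iff)
  ultimately have "B - {2 ^ m} \<in> hamming_code m \<longleftrightarrow> (\<forall>j<m. even (card {i \<in> B. bit i j}))"
    unfolding hamming_code_def by simp
  moreover have "finite B"
    using assms(1) finite_subset by blast
  ultimately show ?thesis
    using assms ext_hamming_code_iff[OF assms(1)]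
    by (simp add: hamming_SQS_def is_zero_sum_check_column)
qed

lemma inj_on_check_column: "inj_on (check_column m) {1..2 ^ m}"
proof (rule inj_onI)
  fix i j
  assume "i \<in> {1..2 ^ m}" "j \<in> {1..2 ^ m}" "check_column m i = check_column m j"
  moreover have "k mod 2 ^ m = (if k = 2 ^ m then 0 else k)" if "k \<in> {1..2 ^ m}" for k :: nat
    using that by auto
  ultimately show "i = j"
    unfolding check_column_def by (metis bvec.inject atLeastAtMost_iff not_one_le_zero)
qed

lemma check_column_image: "check_column m ` {1..2 ^ m} = BVec ` {..<2 ^ m}"
proof (intro equalityI subsetI)
  fix c
  assume "c \<in> check_column m ` {1..2 ^ m}"
  then show "c \<in> BVec ` {..<2 ^ m}"
    by (auto simp: check_column_def)
next
  fix c
  assume "c \<in> BVec ` {..<2 ^ m}"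
  then obtain g where g: "c = BVec g" "g < 2 ^ m"
    by blast
  have "c = check_column m (if g = 0 then 2 ^ m else g)" "(if g = 0 then 2 ^ m else g) \<in> {1..2 ^ m}"
    using g by (auto simp: check_column_def)
  then show "c \<in> check_column m ` {1..2 ^ m}"
    by blast
qed

lemma xor_less_two_power:
  fixes a b :: nat
  assumes "a < 2 ^ m" "b < 2 ^ m"
  shows "xor a b < 2 ^ m"
proof -
  have "take_bit m a = a" "take_bit m b = b"
    using assms by (simp_all add: take_bit_nat_eq_self_iff)
  then have "take_bit m (xor a b) = xor a b"
    by (metis take_bit_xor)
  then show ?thesis
    by (metis take_bit_nat_eq_self_iff)
qed

lemma add_closed_set_check_columns: "add_closed_set (check_column m ` {1..2 ^ m})"
proof
  fix x y
  assume "x \<in> check_column m ` {1..2 ^ m}" "y \<in> check_column m ` {1..2 ^ m}"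
  then show "x + y \<in> check_column m ` {1..2 ^ m}"
    unfolding check_column_image by (auto simp: xor_less_two_power)
qed simp

lemma card_check_columns: "card (check_column m ` {1..2 ^ m}) = 2 ^ m"
  using card_image[OF inj_on_check_column[of m]] by simp

lemma card_hamming_blocks_in:
  assumes "x \<subseteq> {1..2 ^ m}"
  shows "card {B \<in> hamming_SQS m. B \<subseteq> x} = card (blocks_in (check_column m ` x))"
proof -
  have inj: "inj_on (check_column m) x"
    using inj_on_check_column assms by (rule inj_on_subset)
  have block_image: "check_column m ` B \<in> blocks_in (check_column m ` x) \<longleftrightarrow> B \<in> hamming_SQS m"
    if "B \<subseteq> x" for B
  proof -
    have "inj_on (check_column m) B"
      using inj that by (rule inj_on_subset)
    moreover have "B \<subseteq> {1..2 ^ m}"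
      using that assms by blast
    ultimately show ?thesis
      using that mem_hamming_SQS_iff[of B m]
      by (auto simp: blocks_in_def card_image sum.reindex hamming_SQS_def)
  qed
  have "blocks_in (check_column m ` x) = image (check_column m) ` {B \<in> hamming_SQS m. B \<subseteq> x}"
  proof (intro equalityI subsetI)
    fix C
    assume C: "C \<in> blocks_in (check_column m ` x)"
    then obtain B where "B \<subseteq> x" "C = check_column m ` B"
      by (auto simp: blocks_in_def subset_image_iff)
    with C block_image show "C \<in> image (check_column m) ` {B \<in> hamming_SQS m. B \<subseteq> x}"
      by blast
  qed (use block_image in auto)
  moreover have "inj_on (image (check_column m)) {B \<in> hamming_SQS m. B \<subseteq> x}"
    using inj_on_image_Pow[OF inj] by (rule inj_on_subset) auto
  ultimately show ?thesis
    by (simp add: card_image)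
qed

section \<open>Neighbours in the Johnson graph\<close>

lemma johnson_adj_iff_exchange:
  assumes "x \<in> johnson_vertices n k" "0 < k"
  shows "johnson_adj n k x y \<longleftrightarrow> (\<exists>u\<in>x. \<exists>v\<in>{1..n} - x. y = insert v (x - {u}))"
proof
  assume adj: "johnson_adj n k x y"
  then have y: "y \<subseteq> {1..n}" "card y = k" "card (x \<inter> y) = k - 1"
    by (auto simp: johnson_adj_def johnson_vertices_def)
  have x: "x \<subseteq> {1..n}" "card x = k"
    using assms(1) by (auto simp: johnson_vertices_def)
  have "finite x" "finite y"
    using x(1) y(1) finite_subset by blast+
  have "card (x - y) = 1"
    using \<open>finite x\<close> x(2) y(3) assms(2) by (simp add: card_Diff_subset_Int)
  then obtain u where u: "x - y = {u}"
    by (rule card_1_singletonE)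
  have "card (y - x) = 1"
    using \<open>finite y\<close> y(2,3) assms(2) by (simp add: card_Diff_subset_Int Int_commute)
  then obtain v where v: "y - x = {v}"
    by (rule card_1_singletonE)
  have "y = insert v (x - {u})"
    using u v by blast
  moreover have "u \<in> x" "v \<in> {1..n} - x"
    using u v y(1) by auto
  ultimately show "\<exists>u\<in>x. \<exists>v\<in>{1..n} - x. y = insert v (x - {u})"
    by blast
next
  assume "\<exists>u\<in>x. \<exists>v\<in>{1..n} - x. y = insert v (x - {u})"
  then obtain u v where uv: "u \<in> x" "v \<in> {1..n} - x" "y = insert v (x - {u})"
    by blast
  have x: "x \<subseteq> {1..n}" "card x = k" "finite x"
    using assms(1) finite_subset by (auto simp: johnson_vertices_def)
  have "card (x - {u}) = k - 1"
    using uv(1) x by simp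
  moreover have "x \<inter> y = x - {u}"
    using uv by auto
  moreover have "y \<subseteq> {1..n}"
    using uv x(1) by auto
  moreover have "card y = k"
    using uv x assms(2) \<open>card (x - {u}) = k - 1\<close> by simp
  ultimately show "johnson_adj n k x y"
    using assms(1) by (simp add: johnson_adj_def johnson_vertices_def)
qed

lemma inj_on_exchange:
  "inj_on (\<lambda>(u, v). insert v (x - {u})) (x \<times> - x)"
proof (rule inj_onI, clarify)
  fix u\<^sub>1 v\<^sub>1 u\<^sub>2 v\<^sub>2
  assume u: "u\<^sub>1 \<in> x" "u\<^sub>2 \<in> x" and v: "v\<^sub>1 \<notin> x" "v\<^sub>2 \<notin> x"
    and eq: "insert v\<^sub>1 (x - {u\<^sub>1}) = insert v\<^sub>2 (x - {u\<^sub>2})"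
  show "u\<^sub>1 = u\<^sub>2 \<and> v\<^sub>1 = v\<^sub>2"
  proof
    show "v\<^sub>1 = v\<^sub>2"
      using eq v by blast
    show "u\<^sub>1 = u\<^sub>2"
    proof (rule ccontr)
      assume "u\<^sub>1 \<noteq> u\<^sub>2"
      with u(1) have "u\<^sub>1 \<in> insert v\<^sub>2 (x - {u\<^sub>2})"
        by blast
      with eq have "u\<^sub>1 \<in> insert v\<^sub>1 (x - {u\<^sub>1})"
        by simp
      with u(1) v(1) show False
        by blast
    qed
  qed
qed

lemma card_johnson_adj_filter:
  assumes "x \<in> johnson_vertices n k" "0 < k"
  shows "card {y. johnson_adj n k x y \<and> P y} =
    (\<Sum>u\<in>x. card {v \<in> {1..n} - x. P (insert v (x - {u}))})"
proof -
  let ?exchanges = "SIGMA u:x. {v \<in> {1..n} - x. P (insert v (x - {u}))}"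
  have "{y. johnson_adj n k x y \<and> P y} = (\<lambda>(u, v). insert v (x - {u})) ` ?exchanges"
  proof (intro equalityI subsetI)
    fix y
    assume y: "y \<in> {y. johnson_adj n k x y \<and> P y}"
    then have "\<exists>u\<in>x. \<exists>v\<in>{1..n} - x. y = insert v (x - {u})"
      by (simp add: johnson_adj_iff_exchange[OF assms])
    then obtain u v where uv: "u \<in> x" "v \<in> {1..n} - x" "y = insert v (x - {u})"
      by blast
    with y have "(u, v) \<in> ?exchanges"
      by simp
    then have "(\<lambda>(u, v). insert v (x - {u})) (u, v) \<in> (\<lambda>(u, v). insert v (x - {u})) ` ?exchanges"
      by (rule imageI)
    with uv(3) show "y \<in> (\<lambda>(u, v). insert v (x - {u})) ` ?exchanges"
      by (simp only: prod.case)
  next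
    fix y
    assume "y \<in> (\<lambda>(u, v). insert v (x - {u})) ` ?exchanges"
    then obtain u v where uv: "(u, v) \<in> ?exchanges" "y = insert v (x - {u})"
      by (elim imageE) (simp only: split_paired_all prod.case)
    then have "johnson_adj n k x y"
      unfolding johnson_adj_iff_exchange[OF assms] by blast
    with uv show "y \<in> {y. johnson_adj n k x y \<and> P y}"
      by simp
  qed
  moreover have "inj_on (\<lambda>(u, v). insert v (x - {u})) ?exchanges"
    by (rule inj_on_subset[OF inj_on_exchange]) auto
  moreover have "finite x"
    using assms(1) finite_subset by (auto simp: johnson_vertices_def)
  ultimately show ?thesis
    by (simp add: card_image card_SigmaI)
qed

lemma card_filter_image:
  assumes "inj_on f A"
  shows "card {y \<in> f ` A. P y} = card {x \<in> A. P (f x)}"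
proof -
  have "{y \<in> f ` A. P y} = f ` {x \<in> A. P (f x)}"
    by auto
  moreover have "inj_on f {x \<in> A. P (f x)}"
    using assms by (rule inj_on_subset) auto
  ultimately show ?thesis
    by (simp add: card_image)
qed

lemma card_exchanges_check_columns:
  assumes "x \<subseteq> {1..2 ^ m}" "u \<in> x"
  shows "card {v \<in> {1..2 ^ m} - x. card {B \<in> hamming_SQS m. B \<subseteq> insert v (x - {u})} = k} =
    card {g \<in> check_column m ` {1..2 ^ m} - check_column m ` x.
      card (blocks_in (insert g (check_column m ` x - {check_column m u}))) = k}"
proof -
  let ?L = "check_column m" and ?P = "{1..2 ^ m}"
  have inj: "inj_on ?L ?P"
    by (rule inj_on_check_column)
  then have inj_x: "inj_on ?L x"
    using assms(1) by (rule inj_on_subset)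
  have "card {B \<in> hamming_SQS m. B \<subseteq> insert v (x - {u})} =
      card (blocks_in (insert (?L v) (?L ` x - {?L u})))" if "v \<in> ?P - x" for v
  proof -
    have "?L ` insert v (x - {u}) = insert (?L v) (?L ` x - {?L u})"
      using inj_on_image_set_diff[OF inj_x, of "{u}"] assms(2) by auto
    then show ?thesis
      using that assms(1) card_hamming_blocks_in[of "insert v (x - {u})" m] by auto
  qed
  then have "card {v \<in> ?P - x. card {B \<in> hamming_SQS m. B \<subseteq> insert v (x - {u})} = k} =
      card {v \<in> ?P - x. card (blocks_in (insert (?L v) (?L ` x - {?L u}))) = k}"
    by (intro arg_cong[where f = card]) auto
  also have "\<dots> = card {g \<in> ?L ` (?P - x). card (blocks_in (insert g (?L ` x - {?L u}))) = k}"
    using inj by (intro card_filter_image[symmetric] inj_on_subset[OF inj]) auto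
  also have "?L ` (?P - x) = ?L ` ?P - ?L ` x"
    using assms(1) by (intro inj_on_image_set_diff[OF inj]) auto
  finally show ?thesis .
qed

lemma card_johnson_neighbours_by_blocks:
  assumes "x \<in> johnson_vertices (2 ^ m) 6"
  shows "card {y. johnson_adj (2 ^ m) 6 x y \<and> card {B \<in> hamming_SQS m. B \<subseteq> y} = k} =
    neighbour_profile (2 ^ m) (card {B \<in> hamming_SQS m. B \<subseteq> x}) k"
proof -
  let ?L = "check_column m" and ?P = "{1..2 ^ m}"
  let ?exchanges = "\<lambda>w. card {g \<in> ?L ` ?P - ?L ` x. card (blocks_in (insert g (?L ` x - {w}))) = k}"
  interpret add_closed_set "?L ` ?P"
    by (rule add_closed_set_check_columns)
  have x: "x \<subseteq> ?P" "card x = 6"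
    using assms by (auto simp: johnson_vertices_def)
  have inj_x: "inj_on ?L x"
    using inj_on_check_column x(1) by (rule inj_on_subset)
  have "card {y. johnson_adj (2 ^ m) 6 x y \<and> card {B \<in> hamming_SQS m. B \<subseteq> y} = k} =
      (\<Sum>u\<in>x. card {v \<in> ?P - x. card {B \<in> hamming_SQS m. B \<subseteq> insert v (x - {u})} = k})"
    using assms by (rule card_johnson_adj_filter) simp
  also have "\<dots> = (\<Sum>u\<in>x. ?exchanges (?L u))"
    using card_exchanges_check_columns[OF x(1)] by (intro sum.cong) auto
  also have "\<dots> = (\<Sum>w\<in>?L ` x. ?exchanges w)"
    using inj_x by (simp add: sum.reindex)
  also have "\<dots> = neighbour_profile (2 ^ m) (card (blocks_in (?L ` x))) k"
    using sum_card_exchanges[of "?L ` x" k] x inj_x card_check_columns[of m]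
    by (simp add: card_image image_mono)
  finally show ?thesis
    using card_hamming_blocks_in[OF x(1)] by simp
qed

lemma walk_0_iff: "walk E c x 0 \<longleftrightarrow> c = x"
  unfolding walk_def by auto

lemma walk_1_iff: "walk E c x 1 \<longleftrightarrow> E c x"
proof
  assume "walk E c x 1"
  then show "E c x"
    unfolding walk_def by auto
next
  assume "E c x"
  then show "walk E c x 1"
    unfolding walk_def by (intro exI[of _ "\<lambda>i. if i = 0 then c else x"]) auto
qed

lemma walk_2I: "E c y \<Longrightarrow> E y x \<Longrightarrow> walk E c x 2"
  unfolding walk_def
  by (intro exI[of _ "\<lambda>i. if i = 0 then c else if i = 1 then y else x"])
    (simp add: numeral_2_eq_2 less_Suc_eq)

lemma dist_to_eq_0:
  assumes "x \<in> C"
  shows "dist_to E C x = 0"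
  unfolding dist_to_def
proof (rule Least_eq_0)
  have "walk E x x 0"
    by (simp add: walk_0_iff)
  with assms show "\<exists>c\<in>C. walk E c x 0"
    by blast
qed

lemma dist_to_eq_1:
  assumes "x \<notin> C" "c \<in> C" "E c x"
  shows "dist_to E C x = 1"
  unfolding dist_to_def
proof (rule Least_equality)
  have "walk E c x 1"
    using assms(3) walk_1_iff[of E c x] by simp
  with assms(2) show "\<exists>c\<in>C. walk E c x 1"
    by blast
next
  fix k
  assume "\<exists>c\<in>C. walk E c x k"
  then obtain c' where "c' \<in> C" "walk E c' x k"
    by blast
  with assms(1) show "1 \<le> k"
    using walk_0_iff[of E c' x] by (cases k) auto
qed

lemma dist_to_eq_2:
  assumes "x \<notin> C" "\<forall>c\<in>C. \<not> E c x" "c \<in> C" "E c y" "E y x"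
  shows "dist_to E C x = 2"
  unfolding dist_to_def
proof (rule Least_equality)
  show "\<exists>c\<in>C. walk E c x 2"
    using assms(3) walk_2I[of E c y x, OF assms(4,5)] by blast
next
  fix k
  assume "\<exists>c\<in>C. walk E c x k"
  then obtain c' where c': "c' \<in> C" "walk E c' x k"
    by blast
  show "2 \<le> k"
  proof (rule ccontr)
    assume "\<not> 2 \<le> k"
    then consider "k = 0" | "k = 1"
      by linarith
    then show False
    proof cases
      case 1
      with c' assms(1) show False
        using walk_0_iff[of E c' x] by simp
    next
      case 2
      with c' assms(2) show False
        using walk_1_iff[of E c' x] by simp
    qed
  qed
qed

section \<open>The code of block-free 6-sets\<close>

definition distance_of_blocks :: "nat \<Rightarrow> nat" where
  "distance_of_blocks k = (if k = 3 then 2 else k)"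

definition blocks_at_distance :: "int \<Rightarrow> nat" where
  "blocks_at_distance i = (if i = 2 then 3 else nat i)"

locale hamming_johnson =
  fixes m :: nat
  assumes four_le_m: "4 \<le> m"
begin

abbreviation V :: "nat set set" where
  "V \<equiv> johnson_vertices (2 ^ m) 6"

abbreviation E :: "nat set \<Rightarrow> nat set \<Rightarrow> bool" where
  "E \<equiv> johnson_adj (2 ^ m) 6"

abbreviation blocks_count :: "nat set \<Rightarrow> nat" where
  "blocks_count x \<equiv> card {B \<in> hamming_SQS m. B \<subseteq> x}"

abbreviation C :: "nat set set" where
  "C \<equiv> {x \<in> V. \<forall>B \<in> hamming_SQS m. \<not> B \<subseteq> x}"

lemma sixteen_le_two_power: "16 \<le> (2::nat) ^ m"
  using power_increasing[OF four_le_m, of "2::nat"] by simp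

lemma blocks_count_cases:
  assumes "x \<in> V"
  shows "blocks_count x \<in> {0, 1, 3}"
proof -
  have x: "x \<subseteq> {1..2 ^ m}" "card x = 6"
    using assms by (auto simp: johnson_vertices_def)
  have "inj_on (check_column m) x"
    using inj_on_check_column x(1) by (rule inj_on_subset)
  with x(2) have "card (check_column m ` x) = 6"
    by (simp add: card_image)
  then show ?thesis
    using card_blocks_in_sextuple_cases card_hamming_blocks_in[OF x(1)] by simp
qed

lemma adjacent_vertices: "E x y \<Longrightarrow> x \<in> V \<and> y \<in> V"
  by (simp add: johnson_adj_def)

lemma adjacent_sym: "E x y \<Longrightarrow> E y x"
  by (auto simp: johnson_adj_def Int_commute)

lemma neighbour_exists:
  assumes "x \<in> V" "0 < neighbour_profile (2 ^ m) (blocks_count x) k"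
  obtains y where "E x y" "blocks_count y = k"
  using assms card_johnson_neighbours_by_blocks[OF assms(1), of k]
  by (metis (mono_tags, lifting) card.empty empty_Collect_eq less_irrefl)

lemma no_neighbour:
  assumes "x \<in> V" "neighbour_profile (2 ^ m) (blocks_count x) k = 0" "E x y"
  shows "blocks_count y \<noteq> k"
proof
  assume "blocks_count y = k"
  have "finite V"
    by (rule finite_subset[of _ "Pow {1..2 ^ m}"]) (auto simp: johnson_vertices_def)
  then have "finite {y. E x y \<and> blocks_count y = k}"
    by (rule rev_finite_subset) (auto simp: johnson_adj_def)
  with assms \<open>blocks_count y = k\<close> show False
    using card_johnson_neighbours_by_blocks[OF assms(1), of k] by (auto simp: card_eq_0_iff)
qed

lemma mem_code_iff: "x \<in> C \<longleftrightarrow> x \<in> V \<and> blocks_count x = 0"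
proof (cases "x \<in> V")
  case True
  then have "finite x"
    by (auto simp: johnson_vertices_def intro: card_ge_0_finite)
  then have "finite {B \<in> hamming_SQS m. B \<subseteq> x}"
    by (rule rev_finite_subset[OF finite_Pow_iff[THEN iffD2]]) auto
  then show ?thesis
    by auto
qed simp

lemma code_neighbour_exists:
  assumes "x \<in> V" "blocks_count x = 1"
  obtains c where "c \<in> C" "E c x"
proof -
  obtain c where c: "E x c" "blocks_count c = 0"
    using neighbour_exists[OF assms(1), of 0] assms(2) sixteen_le_two_power
    by (auto simp: neighbour_profile_def)
  have "c \<in> C"
    using c(2) adjacent_vertices[OF c(1)] by (intro mem_code_iff[THEN iffD2]) simp
  moreover have "E c x"
    using c(1) by (rule adjacent_sym)
  ultimately show thesis
    by (rule that)
qed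

lemma no_code_neighbour:
  assumes "blocks_count x = 3" "c \<in> C"
  shows "\<not> E c x"
proof
  assume "E c x"
  moreover have "c \<in> V" "blocks_count c = 0"
    using assms(2) by (simp_all only: mem_code_iff)
  ultimately show False
    using assms(1) no_neighbour[of c 3 x] by (simp add: neighbour_profile_def)
qed

lemma dist_to_code:
  assumes "x \<in> V"
  shows "dist_to E C x = distance_of_blocks (blocks_count x)"
proof -
  consider "blocks_count x = 0" | "blocks_count x = 1" | "blocks_count x = 3"
    using blocks_count_cases[OF assms] by auto
  then show ?thesis
  proof cases
    case 1
    with assms have "x \<in> C"
      by (intro mem_code_iff[THEN iffD2]) simp
    with 1 show ?thesis
      by (simp add: dist_to_eq_0 distance_of_blocks_def)
  next
    case 2
    then obtain c where "c \<in> C" "E c x"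
      using code_neighbour_exists[OF assms] by blast
    moreover have "x \<notin> C"
      using 2 mem_code_iff[of x] by simp
    ultimately have "dist_to E C x = 1"
      by (intro dist_to_eq_1)
    with 2 show ?thesis
      by (simp add: distance_of_blocks_def)
  next
    case 3
    then obtain y where y: "E x y" "blocks_count y = 1"
      using neighbour_exists[OF assms, of 1] sixteen_le_two_power by (auto simp: neighbour_profile_def)
    then obtain c where "c \<in> C" "E c y"
      using code_neighbour_exists adjacent_vertices by blast
    moreover have "x \<notin> C"
      using 3 mem_code_iff[of x] by simp
    moreover have "\<forall>c' \<in> C. \<not> E c' x"
      using 3 no_code_neighbour by blast
    moreover have "E y x"
      using y(1) by (rule adjacent_sym)
    ultimately have "dist_to E C x = 2"
      by (intro dist_to_eq_2)
    with 3 show ?thesis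
      by (simp add: distance_of_blocks_def)
  qed
qed

lemma layer_code: "layer V E C i = {x \<in> V. int (distance_of_blocks (blocks_count x)) = i}"
  unfolding layer_def using dist_to_code by auto

lemma layer_code_eq:
  "layer V E C i = (if 0 \<le> i \<and> i \<le> 2 then {x \<in> V. blocks_count x = blocks_at_distance i} else {})"
proof -
  have "int (distance_of_blocks (blocks_count x)) = i \<longleftrightarrow>
      0 \<le> i \<and> i \<le> 2 \<and> blocks_count x = blocks_at_distance i" if "x \<in> V" for x
    using blocks_count_cases[OF that]
    by (auto simp: distance_of_blocks_def blocks_at_distance_def)
  then show ?thesis
    unfolding layer_code by auto
qed

lemma three_blocks_vertex: "{2 ^ m, 1, 2, 3, 4, 5} \<in> V \<and> blocks_count {2 ^ m, 1, 2, 3, 4, 5} = 3"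
proof -
  have small: "(5::nat) < 2 ^ m"
    using sixteen_le_two_power by linarith
  moreover have "n \<notin> {1, 2, 3, 4, 5}" if "5 < n" for n :: nat
    using that by auto
  ultimately have "(2::nat) ^ m \<notin> {1, 2, 3, 4, 5}"
    by blast
  with small have x: "{2 ^ m, 1, 2, 3, 4, 5} \<subseteq> {1..2 ^ m :: nat}" "card {2 ^ m, 1, 2, 3::nat, 4, 5} = 6"
    by auto
  have column: "check_column m i = BVec i" if "i \<le> 5" for i
    using that small by (simp add: check_column_def)
  have "check_column m ` {2 ^ m, 1, 2, 3, 4, 5} = {BVec 0, BVec 1, BVec 2, BVec 3, BVec 4, BVec 5}"
    using column[of 1] column[of 2] column[of 3] column[of 4] column[of 5]
    by (simp add: check_column_def)
  moreover have "card (blocks_in {BVec 0, BVec 1, BVec 2, BVec 3, BVec 4, BVec 5}) = 3"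
    by (subst card_blocks_in_sextuple_with_block) (simp_all add: is_zero_def zero_bvec_def)
  ultimately show ?thesis
    using x card_hamming_blocks_in[OF x(1)] by (simp add: johnson_vertices_def)
qed

lemma layers_nonempty: "layer V E C i \<noteq> {} \<longleftrightarrow> 0 \<le> i \<and> i \<le> 2"
proof -
  obtain x\<^sub>2 where x\<^sub>2: "x\<^sub>2 \<in> V" "blocks_count x\<^sub>2 = 3"
    using three_blocks_vertex by blast
  then obtain x\<^sub>1 where x\<^sub>1: "E x\<^sub>2 x\<^sub>1" "blocks_count x\<^sub>1 = 1"
    using neighbour_exists[of x\<^sub>2 1] sixteen_le_two_power by (auto simp: neighbour_profile_def)
  then obtain x\<^sub>0 where x\<^sub>0: "E x\<^sub>1 x\<^sub>0" "blocks_count x\<^sub>0 = 0"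
    using neighbour_exists[of x\<^sub>1 0] sixteen_le_two_power adjacent_vertices
    by (auto simp: neighbour_profile_def)
  have "x\<^sub>0 \<in> V" "x\<^sub>1 \<in> V"
    using x\<^sub>0(1) x\<^sub>1(1) adjacent_vertices by blast+
  show ?thesis
  proof
    assume "0 \<le> i \<and> i \<le> 2"
    then consider "i = 0" | "i = 1" | "i = 2"
      by linarith
    then show "layer V E C i \<noteq> {}"
      unfolding layer_code_eq
      using x\<^sub>0 x\<^sub>1 x\<^sub>2 \<open>x\<^sub>0 \<in> V\<close> \<open>x\<^sub>1 \<in> V\<close>
      by cases (auto simp: blocks_at_distance_def)
  qed (auto simp: layer_code_eq split: if_splits)
qed

lemma card_neighbours_in_layer:
  assumes "x \<in> layer V E C i"
  shows "card {y \<in> V. E x y \<and> y \<in> layer V E C j} =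
    (if 0 \<le> j \<and> j \<le> 2
     then neighbour_profile (2 ^ m) (blocks_at_distance i) (blocks_at_distance j) else 0)"
proof -
  have x: "x \<in> V" "blocks_count x = blocks_at_distance i"
    using assms by (auto simp: layer_code_eq split: if_splits)
  have "{y \<in> V. E x y \<and> y \<in> layer V E C j} =
      (if 0 \<le> j \<and> j \<le> 2 then {y. E x y \<and> blocks_count y = blocks_at_distance j} else {})"
    using adjacent_vertices by (auto simp: layer_code_eq)
  then show ?thesis
    using card_johnson_neighbours_by_blocks[OF x(1)] x(2) by simp
qed

lemma completely_regular_code: "completely_regular V E C"
proof -
  let ?N = "\<lambda>i j. if 0 \<le> j \<and> j \<le> 2
    then neighbour_profile (2 ^ m) (blocks_at_distance i) (blocks_at_distance j) else 0"
  have "C = layer V E C 0"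
    unfolding layer_code_eq by (rule set_eqI) (subst mem_code_iff, simp add: blocks_at_distance_def)
  moreover have "layer V E C 0 \<noteq> {}"
    by (simp add: layers_nonempty)
  ultimately have "C \<noteq> {}"
    by metis
  moreover have intersection_numbers: "\<forall>i. \<forall>x \<in> layer V E C i.
      card {y \<in> V. E x y \<and> y \<in> layer V E C (i - 1)} = ?N i (i - 1) \<and>
      card {y \<in> V. E x y \<and> y \<in> layer V E C i} = ?N i i \<and>
      card {y \<in> V. E x y \<and> y \<in> layer V E C (i + 1)} = ?N i (i + 1)"
    by (intro allI ballI conjI card_neighbours_in_layer)
  ultimately show ?thesis
    unfolding completely_regular_def
    by (intro conjI exI) (assumption | blast)+
qed

lemma covering_radius_code: "covering_radius V E C = 2"
proof -
  have "{i. layer V E C (int i) \<noteq> {}} = {0, 1, 2}"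
    using layers_nonempty by force
  then show ?thesis
    unfolding covering_radius_def by simp
qed

lemma no_edges_between_layers_0_2:
  assumes "x \<in> layer V E C 0" "y \<in> layer V E C 2"
  shows "\<not> E x y"
  using assms no_neighbour[of x 3 y]
  by (auto simp: layer_code_eq blocks_at_distance_def neighbour_profile_def)

lemma card_neighbours_layer_1_2:
  assumes "x \<in> layer V E C 1"
  shows "card {y \<in> layer V E C 2. E x y} = 6"
proof -
  have "{y \<in> layer V E C 2. E x y} = {y \<in> V. E x y \<and> y \<in> layer V E C 2}"
    by (auto simp: layer_def)
  then show ?thesis
    using card_neighbours_in_layer[OF assms, of 2]
    by (simp add: blocks_at_distance_def neighbour_profile_def)
qed

end

theorem theorem5p1:
  fixes m n :: nat and Q C :: "nat set set" and V :: "nat set set"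
    and E :: "nat set \<Rightarrow> nat set \<Rightarrow> bool"
  assumes "m \<ge> 4" and "n = 2 ^ m"
    and "Q = hamming_SQS m"
    and "V = johnson_vertices n 6" and "E = johnson_adj n 6"
    and "C = {x \<in> V. \<forall>B \<in> Q. \<not> B \<subseteq> x}"
  shows "completely_regular V E C \<and> covering_radius V E C = 2 \<and>
    layer V E C 0 = {x \<in> V. card {B \<in> Q. B \<subseteq> x} = 0} \<and>
    layer V E C 1 = {x \<in> V. card {B \<in> Q. B \<subseteq> x} = 1} \<and>
    layer V E C 2 = {x \<in> V. card {B \<in> Q. B \<subseteq> x} = 3} \<and>
    (\<forall>x \<in> layer V E C 0. \<forall>y \<in> layer V E C 2. \<not> E x y) \<and>
    (\<forall>x \<in> layer V E C 1. card {y \<in> layer V E C 2. E x y} = 6)"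
proof -
  interpret hamming_johnson m
    using assms(1) by unfold_locales
  show ?thesis
    unfolding assms(2-6)
    using completely_regular_code covering_radius_code no_edges_between_layers_0_2
      card_neighbours_layer_1_2
    by (simp add: layer_code_eq blocks_at_distance_def)
qed

end
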